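(* Let $c>0$, let $\beta>0,\delta>0$, and let $G$ be a $c$-Ramsey graph on $n$ vertices together with a set $S\subseteq V(G)$, $|S|\ge n^{3/4}$, such that for all $A,B\subseteq S$ with $|A|,|B|\ge |S|^{1-\beta}$ we have $\delta\le d(A,B)\le 1-\delta$. Let $m=|S|$. Let $r\ge1$ and $X,Y_1,\dots,Y_r\subseteq S$ with $|X|\ge r\,m^{1-\beta}$ and $|Y_1|,\dots,|Y_r|\ge m^{1-\beta}$. Then there exists $v\in X$ such that $d(v,Y_i)\ge\delta$ for every $i=1,\dots,r$.
   Context: Logarithms base 2; $G$ is $c$-Ramsey if no set of $c\log n$ vertices is a clique or independent set. For $A,B\subseteq V(G)$, $d(A,B)=e(A,B)/(|A||B|)$ where $e(A,B)$ is the number of edges of $G$ with one endpoint in $A$ and the other in $B$; $d(v,B)$ means $d(\{v\},B)$. *)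

theory Defs
  imports Complex_Main
begin

definition simple_graph :: "'a set \<Rightarrow> ('a \<Rightarrow> 'a \<Rightarrow> bool) \<Rightarrow> bool" where
  "simple_graph V E \<longleftrightarrow> finite V \<and> (\<forall>u v. E u v \<longrightarrow> u \<in> V \<and> v \<in> V)
     \<and> (\<forall>u v. E u v \<longrightarrow> E v u) \<and> (\<forall>v. \<not> E v v)"

definition is_clique :: "('a \<Rightarrow> 'a \<Rightarrow> bool) \<Rightarrow> 'a set \<Rightarrow> bool" where
  "is_clique E U \<longleftrightarrow> (\<forall>u\<in>U. \<forall>v\<in>U. u \<noteq> v \<longrightarrow> E u v)"

definition is_indep :: "('a \<Rightarrow> 'a \<Rightarrow> bool) \<Rightarrow> 'a set \<Rightarrow> bool" where
  "is_indep E U \<longleftrightarrow> (\<forall>u\<in>U. \<forall>v\<in>U. \<not> E u v)"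

definition ramsey_graph :: "real \<Rightarrow> 'a set \<Rightarrow> ('a \<Rightarrow> 'a \<Rightarrow> bool) \<Rightarrow> bool" where
  "ramsey_graph c V E \<longleftrightarrow> (\<forall>U \<subseteq> V. real (card U) \<ge> c * log 2 (real (card V))
       \<longrightarrow> \<not> is_clique E U \<and> \<not> is_indep E U)"

definition e_count :: "('a \<Rightarrow> 'a \<Rightarrow> bool) \<Rightarrow> 'a set \<Rightarrow> 'a set \<Rightarrow> nat" where
  "e_count E A B = card {(a, b). a \<in> A \<and> b \<in> B \<and> E a b}"

definition density :: "('a \<Rightarrow> 'a \<Rightarrow> bool) \<Rightarrow> 'a set \<Rightarrow> 'a set \<Rightarrow> real" where
  "density E A B = real (e_count E A B) / (real (card A) * real (card B))"

end

theory Submission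
  imports Defs
begin

text \<open>For each i, the vertices of X with d(v, Y i) < \<delta> form a set B whose density
  d(B, Y i) is an average of values below \<delta>; by the density hypothesis B must therefore
  have fewer than t = |S|^(1-\<beta>) elements. The r exceptional sets together have fewer
  than r t \<le> |X| elements, so they cannot cover X. The Ramsey property only serves to
  rule out graphs with fewer than two vertices, which makes S, and hence t, nonzero.\<close>

lemma e_count_eq_sum_degrees:
  assumes "finite A" "finite B"
  shows "real (e_count E A B) = (\<Sum>a\<in>A. real (card {b\<in>B. E a b}))"
proof -
  have "e_count E A B = card (Sigma A (\<lambda>a. {b\<in>B. E a b}))"
    unfolding e_count_def by (rule arg_cong[where f = card]) auto
  with assms show ?thesis by (simp add: card_SigmaI)
qed

lemma density_singleton:
  assumes "finite B"
  shows "density E {v} B = real (card {b\<in>B. E v b}) / real (card B)"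
  unfolding density_def using e_count_eq_sum_degrees[of "{v}" B E] assms by simp

lemma density_lt_if_all_density_singleton_lt:
  assumes "finite A" "A \<noteq> {}" "finite B" "B \<noteq> {}"
    and "\<forall>v\<in>A. density E {v} B < \<delta>"
  shows "density E A B < \<delta>"
proof -
  have B_pos: "real (card B) > 0" using assms(3,4) by (simp add: card_gt_0_iff)
  have "\<forall>v\<in>A. real (card {b\<in>B. E v b}) < \<delta> * real (card B)"
    using assms(3,5) B_pos by (auto simp: density_singleton divide_less_eq)
  hence "(\<Sum>v\<in>A. real (card {b\<in>B. E v b})) < (\<Sum>v\<in>A. \<delta> * real (card B))"
    using assms(1,2) by (intro sum_strict_mono) auto
  hence "real (e_count E A B) < \<delta> * real (card B) * real (card A)"
    using e_count_eq_sum_degrees[OF assms(1,3)] by (simp add: mult_ac)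
  moreover have "real (card A) > 0" using assms(1,2) by (simp add: card_gt_0_iff)
  ultimately show ?thesis
    unfolding density_def using B_pos by (simp add: divide_less_eq mult_ac)
qed

lemma not_subset_UN_if_card_sum_lt:
  fixes t :: real
  assumes "finite I" "I \<noteq> {}" "\<forall>i\<in>I. finite (B i)"
    and "\<forall>i\<in>I. real (card (B i)) < t" and "real (card I) * t \<le> real (card X)"
  shows "\<not> X \<subseteq> (\<Union>i\<in>I. B i)"
proof
  assume cover: "X \<subseteq> (\<Union>i\<in>I. B i)"
  have "real (card X) \<le> real (card (\<Union>i\<in>I. B i))"
    using cover assms(1,3) by (intro of_nat_mono card_mono) auto
  also have "\<dots> \<le> (\<Sum>i\<in>I. real (card (B i)))"
    unfolding of_nat_sum[symmetric] using card_UN_le[OF assms(1), of B] by (rule of_nat_mono)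
  also have "\<dots> < (\<Sum>i\<in>I. t)"
    using assms(1,2,4) by (intro sum_strict_mono) auto
  finally show False using assms(5) by simp
qed

lemma exists_vertex_density_ge_all:
  fixes t \<delta> :: real
  assumes "finite X" "finite I" "I \<noteq> {}" "t > 0"
    and "\<forall>i\<in>I. finite (Y i) \<and> Y i \<noteq> {}"
    and "\<forall>i\<in>I. \<forall>A\<subseteq>X. real (card A) \<ge> t \<longrightarrow> \<delta> \<le> density E A (Y i)"
    and "real (card I) * t \<le> real (card X)"
  shows "\<exists>v\<in>X. \<forall>i\<in>I. \<delta> \<le> density E {v} (Y i)"
proof -
  define bad where "bad i = {v\<in>X. density E {v} (Y i) < \<delta>}" for i
  have bad_sub: "bad i \<subseteq> X" for i by (auto simp: bad_def)
  have bad_small: "real (card (bad i)) < t" if i: "i \<in> I" for i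
  proof (rule ccontr)
    assume "\<not> real (card (bad i)) < t"
    hence large: "real (card (bad i)) \<ge> t" by simp
    with assms(6) i bad_sub have "\<delta> \<le> density E (bad i) (Y i)" by blast
    moreover have "bad i \<noteq> {}" using large assms(4) by auto
    hence "density E (bad i) (Y i) < \<delta>"
      using assms(5) i finite_subset[OF bad_sub assms(1)]
      by (intro density_lt_if_all_density_singleton_lt) (auto simp: bad_def)
    ultimately show False by simp
  qed
  have "\<forall>i\<in>I. finite (bad i)" using finite_subset[OF bad_sub assms(1)] by blast
  hence "\<not> X \<subseteq> (\<Union>i\<in>I. bad i)"
    using bad_small assms(7) by (intro not_subset_UN_if_card_sum_lt[OF assms(2,3)]) auto
  then obtain v where "v \<in> X" "v \<notin> (\<Union>i\<in>I. bad i)" by blast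
  hence "\<forall>i\<in>I. \<delta> \<le> density E {v} (Y i)" by (auto simp: bad_def not_less)
  with \<open>v \<in> X\<close> show ?thesis by blast
qed

lemma ramsey_graph_card_ge_2:
  assumes "ramsey_graph c V E"
  shows "card V \<ge> 2"
proof (rule ccontr)
  assume "\<not> card V \<ge> 2"
  hence "log 2 (real (card V)) = 0" by (cases "card V") (auto simp: log_def less_2_cases_iff)
  \<comment> \<open>then the threshold c log n is 0, and the empty set is a clique\<close>
  with assms have "\<not> is_clique E {}" by (auto simp: ramsey_graph_def)
  thus False by (simp add: is_clique_def)
qed

theorem mainTheorem7:
  fixes c \<beta> \<delta> :: real and V S X :: "'a set" and E :: "'a \<Rightarrow> 'a \<Rightarrow> bool"
    and r :: nat and Y :: "nat \<Rightarrow> 'a set"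
  assumes "c > 0" and "\<beta> > 0" and "\<delta> > 0"
    and "simple_graph V E" and "ramsey_graph c V E"
    and "S \<subseteq> V" and "real (card S) \<ge> real (card V) powr (3/4)"
    and "\<forall>A B. A \<subseteq> S \<and> B \<subseteq> S \<and> real (card A) \<ge> real (card S) powr (1 - \<beta>)
               \<and> real (card B) \<ge> real (card S) powr (1 - \<beta>)
               \<longrightarrow> \<delta> \<le> density E A B \<and> density E A B \<le> 1 - \<delta>"
    and "r \<ge> 1"
    and "X \<subseteq> S" and "\<forall>i\<in>{1..r}. Y i \<subseteq> S"
    and "real (card X) \<ge> real r * real (card S) powr (1 - \<beta>)"
    and "\<forall>i\<in>{1..r}. real (card (Y i)) \<ge> real (card S) powr (1 - \<beta>)"
  shows "\<exists>v\<in>X. \<forall>i\<in>{1..r}. density E {v} (Y i) \<ge> \<delta>"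
proof -
  define t where "t = real (card S) powr (1 - \<beta>)"
  have "finite V" using assms(4) by (simp add: simple_graph_def)
  hence "finite S" using assms(6) by (rule finite_subset[rotated])
  hence "finite X" using assms(10) by (rule finite_subset[rotated])
  have "card V \<ge> 2" using assms(5) by (rule ramsey_graph_card_ge_2)
  hence "real (card V) powr (3/4) > 0" by simp
  hence "real (card S) > 0" using assms(7) by linarith
  hence "t > 0" by (simp add: t_def)
  have "finite (Y i) \<and> Y i \<noteq> {}" if "i \<in> {1..r}" for i
  proof
    show "finite (Y i)" using assms(11) that \<open>finite S\<close> finite_subset by blast
    have "t \<le> real (card (Y i))" using assms(13) that unfolding t_def by blast
    thus "Y i \<noteq> {}" using \<open>t > 0\<close> by auto
  qed
  moreover have "\<delta> \<le> density E A (Y i)"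
    if "i \<in> {1..r}" "A \<subseteq> X" "real (card A) \<ge> t" for i A
    using assms(8,10) assms(11,13)[rule_format, OF that(1)] that(2,3) unfolding t_def by blast
  moreover have "real (card {1..r}) * t \<le> real (card X)" using assms(12) by (simp add: t_def)
  ultimately show ?thesis
    using \<open>finite X\<close> \<open>t > 0\<close> assms(9)
    by (intro exists_vertex_density_ge_all[where I = "{1..r}" and t = t]) auto
qed

end
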